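(* Let $F$ be an infinite family of index sets linearly ordered by $\subseteq$ such that $I_1\subsetneq I_2$ in $F$ implies $I_2\setminus I_1$ is infinite, and let $\mathcal{T}_F=\{T_I\mid I\in F\}$. Let $J$ be an index set with $T_J\notin\mathcal{T}_F$. Then $T_J\in\mathrm{Cl}_E(\mathcal{T}_F)$ if and only if $J$ is an (upper or lower) accumulation point for some infinite $F'\subseteq F$.
   Context: A predicate symbol $R$ is non-empty for a theory $T$ if $T\vdash\exists\bar x R(\bar x)$, empty otherwise. A complete theory $T$ in a predicate language is language uniform (LU) if for each arity $m$, every permutation of the set of $m$-ary symbols non-empty for $T$ preserves $T$. Let $T_0$ be a complete LU-theory in a relational language $\Sigma_0$, let $n\ge1$, and let $\{R_k\mid k\in I_0\}$, $I_0$ infinite, be the set of $n$-ary symbols of $\Sigma_0$ that are non-empty for $T_0$. Let $\Sigma'=\{R_k\mid k\in I_0\}\cup\{$symbols of $\Sigma_0$ of arity $\neq n\}$. An index set is an infinite $I\subseteq I_0$ with $|I|=|I_0|$ and $|I_0\setminus I|$ equal to the number of $n$-ary symbols of $\Sigma_0$ that are empty for $T_0$. For an index set $I$, $T_I$ is the complete $\Sigma'$-theory axiomatized by the restriction of $T_0$ to the language $\{R_k\mid k\in I\}\cup\{$symbols of arity $\ne n\}$ together with $\{\forall\bar x\neg R_l(\bar x)\mid l\in I_0\setminus I\}$. $E$-closure (over $\Sigma'$): let $E$ be a new binary symbol. The $E$-combination of a family $(\mathcal{A}_i)_i$ of $\Sigma'$-structures with disjoint universes is the $(\Sigma'\cup\{E\})$-structure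 on $\bigcup_iA_i$ with $E$ the equivalence relation whose classes are the $A_i$ and each $R\in\Sigma'$ interpreted as $\bigcup_iR^{\mathcal{A}_i}$. For a set $\mathcal{T}$ of complete $\Sigma'$-theories, $\mathrm{Cl}_E(\mathcal{T})$ is the set of complete theories of the $E$-classes (as induced $\Sigma'$-structures) of structures elementarily equivalent to some $E$-combination of structures whose theories lie in $\mathcal{T}$. For infinite $F'\subseteq F$: $\bigcup F'$ is the upper accumulation point of $F'$ if $\bigcup F'\notin F'$, and $\bigcap F'$ is the lower accumulation point of $F'$ if $\bigcap F'\notin F'$. *)

theory Defs
  imports Main "HOL-Library.Equipollence"
begin

datatype 'p fm =
    Eq nat nat
  | Rel 'p "nat list"
  | Neg "'p fm"
  | Conj "'p fm" "'p fm"
  | Ex nat "'p fm"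

fun fv :: "'p fm \<Rightarrow> nat set" where
  "fv (Eq x y) = {x, y}"
| "fv (Rel p xs) = set xs"
| "fv (Neg \<phi>) = fv \<phi>"
| "fv (Conj \<phi> \<psi>) = fv \<phi> \<union> fv \<psi>"
| "fv (Ex x \<phi>) = fv \<phi> - {x}"

fun wf_fm :: "('p \<Rightarrow> nat) \<Rightarrow> 'p set \<Rightarrow> 'p fm \<Rightarrow> bool" where
  "wf_fm ar \<Sigma> (Eq x y) = True"
| "wf_fm ar \<Sigma> (Rel p xs) = (p \<in> \<Sigma> \<and> length xs = ar p)"
| "wf_fm ar \<Sigma> (Neg \<phi>) = wf_fm ar \<Sigma> \<phi>"
| "wf_fm ar \<Sigma> (Conj \<phi> \<psi>) = (wf_fm ar \<Sigma> \<phi> \<and> wf_fm ar \<Sigma> \<psi>)"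
| "wf_fm ar \<Sigma> (Ex x \<phi>) = wf_fm ar \<Sigma> \<phi>"

definition sentence :: "('p \<Rightarrow> nat) \<Rightarrow> 'p set \<Rightarrow> 'p fm \<Rightarrow> bool" where
  "sentence ar \<Sigma> \<phi> \<longleftrightarrow> wf_fm ar \<Sigma> \<phi> \<and> fv \<phi> = {}"

definition exs :: "nat list \<Rightarrow> 'p fm \<Rightarrow> 'p fm" where
  "exs vs \<phi> = foldr Ex vs \<phi>"

definition alls :: "nat list \<Rightarrow> 'p fm \<Rightarrow> 'p fm" where
  "alls vs \<phi> = foldr (\<lambda>x \<psi>. Neg (Ex x (Neg \<psi>))) vs \<phi>"

record ('p, 'u) struc =
  sdom :: "'u set"
  sint :: "'p \<Rightarrow> 'u list set"

definition is_struct :: "('p \<Rightarrow> nat) \<Rightarrow> 'p set \<Rightarrow> ('p, 'u) struc \<Rightarrow> bool" where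
  "is_struct ar \<Sigma> M \<longleftrightarrow> sdom M \<noteq> {} \<and>
     (\<forall>p\<in>\<Sigma>. sint M p \<subseteq> {xs. length xs = ar p \<and> set xs \<subseteq> sdom M})"

fun sat :: "('p, 'u) struc \<Rightarrow> (nat \<Rightarrow> 'u) \<Rightarrow> 'p fm \<Rightarrow> bool" where
  "sat M v (Eq x y) = (v x = v y)"
| "sat M v (Rel p xs) = (map v xs \<in> sint M p)"
| "sat M v (Neg \<phi>) = (\<not> sat M v \<phi>)"
| "sat M v (Conj \<phi> \<psi>) = (sat M v \<phi> \<and> sat M v \<psi>)"
| "sat M v (Ex x \<phi>) = (\<exists>a\<in>sdom M. sat M (v(x := a)) \<phi>)"

definition models :: "('p, 'u) struc \<Rightarrow> 'p fm \<Rightarrow> bool" where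
  "models M \<phi> \<longleftrightarrow> (\<forall>v. range v \<subseteq> sdom M \<longrightarrow> sat M v \<phi>)"

definition Th :: "('p \<Rightarrow> nat) \<Rightarrow> 'p set \<Rightarrow> ('p, 'u) struc \<Rightarrow> 'p fm set" where
  "Th ar \<Sigma> M = {\<phi>. sentence ar \<Sigma> \<phi> \<and> models M \<phi>}"

text \<open>Semantic consequence (standing in for \<open>\<turnstile>\<close>, by the completeness theorem),
  evaluated in structures whose universes are subsets of the type 'u.\<close>
definition entails :: "'u itself \<Rightarrow> ('p \<Rightarrow> nat) \<Rightarrow> 'p set \<Rightarrow> 'p fm set \<Rightarrow> 'p fm \<Rightarrow> bool" where
  "entails _ ar \<Sigma> T \<phi> \<longleftrightarrow>
     (\<forall>M :: ('p, 'u) struc. is_struct ar \<Sigma> M \<and> (\<forall>\<psi>\<in>T. models M \<psi>) \<longrightarrow> models M \<phi>)"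

definition complete_theory :: "'u itself \<Rightarrow> ('p \<Rightarrow> nat) \<Rightarrow> 'p set \<Rightarrow> 'p fm set \<Rightarrow> bool" where
  "complete_theory _ ar \<Sigma> T \<longleftrightarrow>
     T \<subseteq> {\<phi>. sentence ar \<Sigma> \<phi>}
     \<and> (\<exists>M :: ('p, 'u) struc. is_struct ar \<Sigma> M \<and> (\<forall>\<psi>\<in>T. models M \<psi>))
     \<and> (\<forall>\<phi>. sentence ar \<Sigma> \<phi> \<longrightarrow> \<phi> \<in> T \<or> Neg \<phi> \<in> T)"

definition nonempty_sym :: "'u itself \<Rightarrow> ('p \<Rightarrow> nat) \<Rightarrow> 'p set \<Rightarrow> 'p fm set \<Rightarrow> 'p \<Rightarrow> bool" where
  "nonempty_sym u ar \<Sigma> T R \<longleftrightarrow> entails u ar \<Sigma> T (exs [0..<ar R] (Rel R [0..<ar R]))"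

definition LU :: "'u itself \<Rightarrow> ('p \<Rightarrow> nat) \<Rightarrow> 'p set \<Rightarrow> 'p fm set \<Rightarrow> bool" where
  "LU u ar \<Sigma> T \<longleftrightarrow>
     (\<forall>m \<sigma>. let S = {R \<in> \<Sigma>. ar R = m \<and> nonempty_sym u ar \<Sigma> T R} in
        bij_betw \<sigma> S S \<and> (\<forall>x. x \<notin> S \<longrightarrow> \<sigma> x = x) \<longrightarrow> map_fm \<sigma> ` T = T)"

text \<open>The non-empty n-ary symbols are indexed by themselves: \<open>R\<^sub>k = k\<close>, \<open>I\<^sub>0\<close> = set of them.\<close>
definition I0 :: "'u itself \<Rightarrow> ('s \<Rightarrow> nat) \<Rightarrow> 's set \<Rightarrow> 's fm set \<Rightarrow> nat \<Rightarrow> 's set" where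
  "I0 u ar \<Sigma>0 T0 n = {R \<in> \<Sigma>0. ar R = n \<and> nonempty_sym u ar \<Sigma>0 T0 R}"

definition empty_nary :: "'u itself \<Rightarrow> ('s \<Rightarrow> nat) \<Rightarrow> 's set \<Rightarrow> 's fm set \<Rightarrow> nat \<Rightarrow> 's set" where
  "empty_nary u ar \<Sigma>0 T0 n = {R \<in> \<Sigma>0. ar R = n} - I0 u ar \<Sigma>0 T0 n"

definition Sigma' :: "'u itself \<Rightarrow> ('s \<Rightarrow> nat) \<Rightarrow> 's set \<Rightarrow> 's fm set \<Rightarrow> nat \<Rightarrow> 's set" where
  "Sigma' u ar \<Sigma>0 T0 n = I0 u ar \<Sigma>0 T0 n \<union> {R \<in> \<Sigma>0. ar R \<noteq> n}"

definition index_set :: "'u itself \<Rightarrow> ('s \<Rightarrow> nat) \<Rightarrow> 's set \<Rightarrow> 's fm set \<Rightarrow> nat \<Rightarrow> 's set \<Rightarrow> bool" where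
  "index_set u ar \<Sigma>0 T0 n I \<longleftrightarrow>
     I \<subseteq> I0 u ar \<Sigma>0 T0 n \<and> infinite I \<and> eqpoll I (I0 u ar \<Sigma>0 T0 n)
     \<and> eqpoll (I0 u ar \<Sigma>0 T0 n - I) (empty_nary u ar \<Sigma>0 T0 n)"

definition TI :: "'u itself \<Rightarrow> ('s \<Rightarrow> nat) \<Rightarrow> 's set \<Rightarrow> 's fm set \<Rightarrow> nat \<Rightarrow> 's set \<Rightarrow> 's fm set" where
  "TI u ar \<Sigma>0 T0 n I =
     (let L = I \<union> {R \<in> \<Sigma>0. ar R \<noteq> n};
          Ax = {\<psi> \<in> T0. sentence ar L \<psi>}
               \<union> {alls [0..<ar l] (Neg (Rel l [0..<ar l])) | l. l \<in> I0 u ar \<Sigma>0 T0 n - I}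
      in {\<phi>. sentence ar (Sigma' u ar \<Sigma>0 T0 n) \<phi> \<and> entails u ar (Sigma' u ar \<Sigma>0 T0 n) Ax \<phi>})"

text \<open>Language \<open>\<Sigma> \<union> {E}\<close>: symbols \<open>Some R\<close> for \<open>R \<in> \<Sigma>\<close>, and \<open>None\<close> = E (binary).\<close>
definition arE :: "('p \<Rightarrow> nat) \<Rightarrow> 'p option \<Rightarrow> nat" where
  "arE ar q = (case q of None \<Rightarrow> 2 | Some p \<Rightarrow> ar p)"

definition SigE :: "'p set \<Rightarrow> 'p option set" where
  "SigE \<Sigma> = insert None (Some ` \<Sigma>)"

definition Ecomb :: "('p, 'u) struc set \<Rightarrow> ('p option, 'u) struc" where
  "Ecomb \<A> = \<lparr> sdom = \<Union> (sdom ` \<A>),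
     sint = (\<lambda>q. case q of
                None \<Rightarrow> {[a, b] | a b. \<exists>A\<in>\<A>. a \<in> sdom A \<and> b \<in> sdom A}
              | Some p \<Rightarrow> \<Union>A\<in>\<A>. sint A p) \<rparr>"

definition induced :: "('p option, 'u) struc \<Rightarrow> 'u set \<Rightarrow> ('p, 'u) struc" where
  "induced M C = \<lparr> sdom = C, sint = (\<lambda>p. {xs \<in> sint M (Some p). set xs \<subseteq> C}) \<rparr>"

definition ClE :: "'u itself \<Rightarrow> ('p \<Rightarrow> nat) \<Rightarrow> 'p set \<Rightarrow> 'p fm set set \<Rightarrow> 'p fm set set" where
  "ClE _ ar \<Sigma> \<T> =
     {Th ar \<Sigma> (induced M C) | (M :: ('p option, 'u) struc) C.
        (\<exists>\<A> :: ('p, 'u) struc set.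
            \<A> \<noteq> {}
          \<and> (\<forall>A\<in>\<A>. is_struct ar \<Sigma> A \<and> Th ar \<Sigma> A \<in> \<T>)
          \<and> pairwise (\<lambda>A B. sdom A \<inter> sdom B = {}) \<A>
          \<and> is_struct (arE ar) (SigE \<Sigma>) M
          \<and> Th (arE ar) (SigE \<Sigma>) M = Th (arE ar) (SigE \<Sigma>) (Ecomb \<A>))
      \<and> (\<exists>a\<in>sdom M. C = {b \<in> sdom M. [a, b] \<in> sint M None})}"

end

theory Submission
  imports Defs
begin

text \<open>
  Everything is read off one model \<open>N0\<close> of the complete theory \<open>T0\<close>: \<open>T\<^sub>I\<close> is the theory of
  \<open>N0\<close> with the \<open>n\<close>-ary symbols of \<open>I\<^sub>0 - I\<close> made empty, because in a model of the axioms of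
  \<open>T\<^sub>I\<close> every atom of such a symbol may be replaced by falsity, which turns a sentence into one
  of the restricted language of \<open>T0\<close>.

  If \<open>T\<^sub>J\<close> is the theory of an \<open>E\<close>-class, then for every finite set \<open>S\<close> of indices the
  \<open>E\<close>-language can say ``some class contains an \<open>R\<^sub>s\<close>-tuple exactly for the \<open>s \<in> S \<inter> J\<close>''.
  This holds in the combination only if some \<open>I \<in> F\<close> agrees with \<open>J\<close> on \<open>S\<close>, i.e. \<open>J\<close> lies
  in the closure of \<open>F\<close> in the product topology on sets of indices; for a chain that means
  \<open>J\<close> is the union of the members below it or the intersection of those above it.

  Conversely, let \<open>sel k \<in> F\<close> (\<open>k \<in> K\<close>) approximate \<open>J\<close> and combine infinitely many copies
  of a model of each \<open>T\<^bsub>sel k\<^esub>\<close>, with or without one extra class modelling \<open>T\<^sub>J\<close>. A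
  sentence mentions finitely many symbols, on which \<open>J\<close> agrees with some \<open>sel k\<close>; shifting
  the copies of \<open>T\<^bsub>sel k\<^esub>\<close> by one place absorbs the extra class, so both combinations
  satisfy the sentence alike. Hence they are elementarily equivalent and \<open>T\<^sub>J\<close> is the theory
  of an \<open>E\<close>-class.
\<close>

fun syms :: "'p fm \<Rightarrow> 'p set" where
  "syms (Eq x y) = {}"
| "syms (Rel p xs) = {p}"
| "syms (Neg \<phi>) = syms \<phi>"
| "syms (Conj \<phi> \<psi>) = syms \<phi> \<union> syms \<psi>"
| "syms (Ex x \<phi>) = syms \<phi>"

lemma finite_syms: "finite (syms \<phi>)"
  by (induct \<phi>) auto

lemma wf_fm_mono: "wf_fm ar \<Sigma> \<phi> \<Longrightarrow> \<Sigma> \<subseteq> \<Sigma>' \<Longrightarrow> wf_fm ar \<Sigma>' \<phi>"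
  by (induct \<phi>) auto

lemma wf_fm_Int_syms: "wf_fm ar \<Sigma> \<phi> \<Longrightarrow> wf_fm ar (\<Sigma> \<inter> syms \<phi>) \<phi>"
proof -
  have "wf_fm ar \<Sigma> \<phi> \<Longrightarrow> syms \<phi> \<subseteq> Q \<Longrightarrow> wf_fm ar (\<Sigma> \<inter> Q) \<phi>" for Q
    by (induct \<phi>) auto
  then show "wf_fm ar \<Sigma> \<phi> \<Longrightarrow> wf_fm ar (\<Sigma> \<inter> syms \<phi>) \<phi>" by blast
qed

lemma sat_cong: "\<forall>x\<in>fv \<phi>. v x = w x \<Longrightarrow> sat M v \<phi> = sat M w \<phi>"
proof (induct \<phi> arbitrary: v w)
  case (Rel p xs)
  then have "map v xs = map w xs" by simp
  then show ?case by (simp only: sat.simps)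
next
  case (Conj \<phi> \<psi>)
  have "sat M v \<phi> = sat M w \<phi>" by (rule Conj.hyps(1)) (use Conj.prems in auto)
  moreover have "sat M v \<psi> = sat M w \<psi>" by (rule Conj.hyps(2)) (use Conj.prems in auto)
  ultimately show ?case by simp
next
  case (Ex x \<phi>)
  have "sat M (v(x := a)) \<phi> = sat M (w(x := a)) \<phi>" for a
    by (rule Ex.hyps) (use Ex.prems in auto)
  then show ?case by simp
qed auto

lemma models_iff_sat:
  assumes "fv \<phi> = {}" and "range v \<subseteq> sdom M"
  shows "models M \<phi> \<longleftrightarrow> sat M v \<phi>"
proof
  assume "models M \<phi>"
  then show "sat M v \<phi>" using assms(2) by (simp add: models_def)
next
  assume v: "sat M v \<phi>"
  show "models M \<phi>" unfolding models_def
  proof (intro allI impI)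
    fix w :: "nat \<Rightarrow> _"
    have "sat M w \<phi> = sat M v \<phi>" by (rule sat_cong) (use assms(1) in simp)
    then show "sat M w \<phi>" using v by simp
  qed
qed

lemma sat_iso:
  assumes inj: "inj_on h (sdom M1)" and img: "h ` sdom M1 = sdom M2"
    and rel: "\<And>p xs. p \<in> P \<Longrightarrow> set xs \<subseteq> sdom M1 \<Longrightarrow> map h xs \<in> sint M2 p \<longleftrightarrow> xs \<in> sint M1 p"
  shows "wf_fm ar P \<phi> \<Longrightarrow> range v \<subseteq> sdom M1 \<Longrightarrow> sat M2 (h \<circ> v) \<phi> \<longleftrightarrow> sat M1 v \<phi>"
proof (induct \<phi> arbitrary: v)
  case (Eq x y)
  then have "v x \<in> sdom M1" "v y \<in> sdom M1" by auto
  then show ?case using inj by (simp add: inj_on_eq_iff)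
next
  case (Rel p xs)
  then show ?case using rel[of p "map v xs"] by (auto simp: comp_def)
next
  case (Ex x \<phi>)
  have upd: "(h \<circ> v)(x := h b) = h \<circ> v(x := b)" for b
    by (auto simp: fun_eq_iff)
  have "sat M2 ((h \<circ> v)(x := h b)) \<phi> \<longleftrightarrow> sat M1 (v(x := b)) \<phi>" if "b \<in> sdom M1" for b
    unfolding upd using Ex that by (intro Ex.hyps) (auto simp: image_subset_iff)
  then have "(\<exists>a\<in>h ` sdom M1. sat M2 ((h \<circ> v)(x := a)) \<phi>) \<longleftrightarrow> (\<exists>b\<in>sdom M1. sat M1 (v(x := b)) \<phi>)"
    by blast
  then show ?case using img by (simp only: sat.simps)
qed auto

lemma models_iso:
  assumes inj: "inj_on h (sdom M1)" and img: "h ` sdom M1 = sdom M2"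
    and rel: "\<And>p xs. p \<in> P \<Longrightarrow> set xs \<subseteq> sdom M1 \<Longrightarrow> map h xs \<in> sint M2 p \<longleftrightarrow> xs \<in> sint M1 p"
    and wf: "wf_fm ar P \<phi>"
  shows "models M2 \<phi> \<longleftrightarrow> models M1 \<phi>"
proof
  assume "models M2 \<phi>"
  then show "models M1 \<phi>"
    using img sat_iso[OF inj img rel wf] unfolding models_def
    by (metis image_comp image_mono)
next
  assume M1: "models M1 \<phi>"
  show "models M2 \<phi>" unfolding models_def
  proof (intro allI impI)
    fix w :: "nat \<Rightarrow> _" assume w: "range w \<subseteq> sdom M2"
    define v where "v = inv_into (sdom M1) h \<circ> w"
    have v: "range v \<subseteq> sdom M1" and hv: "h \<circ> v = w"
      using w img by (auto simp: v_def fun_eq_iff intro!: inv_into_into f_inv_into_f)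
    show "sat M2 w \<phi>"
      using M1 v sat_iso[OF inj img rel wf v] unfolding hv models_def by blast
  qed
qed

lemma Th_iso:
  assumes "inj_on h (sdom M1)" and "h ` sdom M1 = sdom M2"
    and "\<And>p xs. p \<in> P \<Longrightarrow> set xs \<subseteq> sdom M1 \<Longrightarrow> map h xs \<in> sint M2 p \<longleftrightarrow> xs \<in> sint M1 p"
  shows "Th ar P M1 = Th ar P M2"
  unfolding Th_def sentence_def using models_iso[OF assms] by blast

lemma models_cong:
  assumes "sdom M1 = sdom M2" and "\<And>p. p \<in> P \<Longrightarrow> sint M1 p = sint M2 p" and "wf_fm ar P \<phi>"
  shows "models M1 \<phi> \<longleftrightarrow> models M2 \<phi>"
  using models_iso[of id M1 M2 P ar \<phi>] assms by simp

lemma Th_eq_imp_nonempty: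
  assumes "Th ar P M = Th ar P N" and "sdom N \<noteq> {}"
  shows "sdom M \<noteq> {}"
proof
  assume empty: "sdom M = {}"
  let ?false = "Ex 0 (Neg (Eq 0 0)) :: 'a fm"
  have "?false \<in> Th ar P M"
    using empty by (auto simp: Th_def sentence_def models_def)
  then have "models N ?false"
    unfolding assms(1) by (simp add: Th_def)
  moreover obtain a where "a \<in> sdom N"
    using assms(2) by blast
  then have "range (\<lambda>_. a) \<subseteq> sdom N"
    by auto
  ultimately show False
    unfolding models_def by fastforce
qed

fun upds :: "(nat \<Rightarrow> 'u) \<Rightarrow> nat list \<Rightarrow> 'u list \<Rightarrow> nat \<Rightarrow> 'u" where
  "upds v (x # xs) (a # as) = upds (v(x := a)) xs as"
| "upds v _ _ = v"

lemma upds_other: "y \<notin> set xs \<Longrightarrow> upds v xs as y = v y"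
  by (induct v xs as rule: upds.induct) auto

lemma map_upds: "distinct xs \<Longrightarrow> length as = length xs \<Longrightarrow> map (upds v xs as) xs = as"
proof (induct xs arbitrary: v as)
  case (Cons x xs)
  then obtain a as' where "as = a # as'" by (cases as) auto
  with Cons show ?case by (simp add: upds_other)
qed simp

lemma exs_simps [simp]: "exs [] \<phi> = \<phi>" "exs (x # xs) \<phi> = Ex x (exs xs \<phi>)"
  by (simp_all add: exs_def)

lemma alls_simps [simp]: "alls [] \<phi> = \<phi>" "alls (x # xs) \<phi> = Neg (Ex x (Neg (alls xs \<phi>)))"
  by (simp_all add: alls_def)

lemma fv_exs [simp]: "fv (exs xs \<phi>) = fv \<phi> - set xs"
  by (induct xs) auto

lemma fv_alls [simp]: "fv (alls xs \<phi>) = fv \<phi> - set xs"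
  by (induct xs) auto

lemma wf_fm_exs [simp]: "wf_fm ar \<Sigma> (exs xs \<phi>) = wf_fm ar \<Sigma> \<phi>"
  by (induct xs) auto

lemma ex_length_Suc: "(\<exists>as. length as = Suc n \<and> P as) \<longleftrightarrow> (\<exists>a as. length as = n \<and> P (a # as))"
  by (metis length_Suc_conv)

lemma all_length_Suc: "(\<forall>as. length as = Suc n \<and> P as \<longrightarrow> Q as) \<longleftrightarrow> (\<forall>a as. length as = n \<and> P (a # as) \<longrightarrow> Q (a # as))"
  by (metis length_Suc_conv)

lemma sat_exs:
  "sat M v (exs xs \<phi>) \<longleftrightarrow>
     (\<exists>as. length as = length xs \<and> set as \<subseteq> sdom M \<and> sat M (upds v xs as) \<phi>)"
proof (induct xs arbitrary: v)
  case (Cons x xs)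
  have "sat M v (exs (x # xs) \<phi>) \<longleftrightarrow>
      (\<exists>a\<in>sdom M. \<exists>as. length as = length xs \<and> set as \<subseteq> sdom M \<and> sat M (upds (v(x := a)) xs as) \<phi>)"
    unfolding exs_simps sat.simps Cons ..
  also have "\<dots> \<longleftrightarrow>
      (\<exists>as. length as = length (x # xs) \<and> set as \<subseteq> sdom M \<and> sat M (upds v (x # xs) as) \<phi>)"
    unfolding length_Cons ex_length_Suc by auto
  finally show ?case .
qed simp

lemma sat_alls:
  "sat M v (alls xs \<phi>) \<longleftrightarrow>
     (\<forall>as. length as = length xs \<and> set as \<subseteq> sdom M \<longrightarrow> sat M (upds v xs as) \<phi>)"
proof (induct xs arbitrary: v)
  case (Cons x xs)
  have "sat M v (alls (x # xs) \<phi>) \<longleftrightarrow>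
      (\<forall>a\<in>sdom M. \<forall>as. length as = length xs \<and> set as \<subseteq> sdom M \<longrightarrow> sat M (upds (v(x := a)) xs as) \<phi>)"
    unfolding alls_simps sat.simps Cons by blast
  also have "\<dots> \<longleftrightarrow>
      (\<forall>as. length as = length (x # xs) \<and> set as \<subseteq> sdom M \<longrightarrow> sat M (upds v (x # xs) as) \<phi>)"
    unfolding length_Cons all_length_Suc by auto
  finally show ?case .
qed simp

definition exists_tuple :: "('p \<Rightarrow> nat) \<Rightarrow> 'p \<Rightarrow> 'p fm" where
  "exists_tuple ar p = exs [0..<ar p] (Rel p [0..<ar p])"

lemma sentence_exists_tuple: "p \<in> \<Sigma> \<Longrightarrow> sentence ar \<Sigma> (exists_tuple ar p)"
  by (simp add: sentence_def exists_tuple_def)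

lemma models_exists_tuple:
  assumes "sdom M \<noteq> {}"
  shows "models M (exists_tuple ar p) \<longleftrightarrow>
    (\<exists>as. length as = ar p \<and> set as \<subseteq> sdom M \<and> as \<in> sint M p)"
proof -
  obtain a where "a \<in> sdom M" using assms by blast
  then have "models M (exists_tuple ar p) \<longleftrightarrow> sat M (\<lambda>_. a) (exists_tuple ar p)"
    by (intro models_iff_sat) (auto simp: exists_tuple_def)
  then show ?thesis
    by (auto simp: exists_tuple_def sat_exs map_upds)
qed

lemma models_no_tuple:
  assumes "sdom M \<noteq> {}"
  shows "models M (alls [0..<ar p] (Neg (Rel p [0..<ar p]))) \<longleftrightarrow>
    (\<forall>as. length as = ar p \<and> set as \<subseteq> sdom M \<longrightarrow> as \<notin> sint M p)"
proof -
  obtain a where "a \<in> sdom M" using assms by blast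
  then have "models M (alls [0..<ar p] (Neg (Rel p [0..<ar p]))) \<longleftrightarrow>
      sat M (\<lambda>_. a) (alls [0..<ar p] (Neg (Rel p [0..<ar p])))"
    by (intro models_iff_sat) auto
  then show ?thesis
    by (auto simp: sat_alls map_upds)
qed

fun erase_syms :: "'p set \<Rightarrow> 'p fm \<Rightarrow> 'p fm" where
  "erase_syms D (Eq x y) = Eq x y"
| "erase_syms D (Rel p xs) = (if p \<in> D then Ex 0 (Neg (Eq 0 0)) else Rel p xs)"
| "erase_syms D (Neg \<phi>) = Neg (erase_syms D \<phi>)"
| "erase_syms D (Conj \<phi> \<psi>) = Conj (erase_syms D \<phi>) (erase_syms D \<psi>)"
| "erase_syms D (Ex x \<phi>) = Ex x (erase_syms D \<phi>)"

lemma fv_erase_syms: "fv (erase_syms D \<phi>) \<subseteq> fv \<phi>"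
  by (induct \<phi>) auto

lemma wf_fm_erase_syms: "wf_fm ar \<Sigma> \<phi> \<Longrightarrow> wf_fm ar (\<Sigma> - D) (erase_syms D \<phi>)"
  by (induct \<phi>) auto

lemma sat_erase_syms:
  assumes empty: "\<And>p xs. p \<in> D \<Longrightarrow> length xs = ar p \<Longrightarrow> set xs \<subseteq> sdom M \<Longrightarrow> xs \<notin> sint M p"
  shows "wf_fm ar \<Sigma> \<phi> \<Longrightarrow> range v \<subseteq> sdom M \<Longrightarrow> sat M v (erase_syms D \<phi>) \<longleftrightarrow> sat M v \<phi>"
proof (induct \<phi> arbitrary: v)
  case (Rel p xs)
  then show ?case using empty[of p "map v xs"] by auto
next
  case (Ex x \<phi>)
  have "sat M (v(x := a)) (erase_syms D \<phi>) \<longleftrightarrow> sat M (v(x := a)) \<phi>" if "a \<in> sdom M" for a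
    by (rule Ex.hyps) (use Ex.prems that in \<open>auto simp: image_subset_iff\<close>)
  then show ?case by simp
qed auto

lemma models_erase_syms:
  assumes "\<And>p xs. p \<in> D \<Longrightarrow> length xs = ar p \<Longrightarrow> set xs \<subseteq> sdom M \<Longrightarrow> xs \<notin> sint M p"
    and "wf_fm ar \<Sigma> \<phi>"
  shows "models M (erase_syms D \<phi>) \<longleftrightarrow> models M \<phi>"
  using sat_erase_syms[OF assms] by (auto simp: models_def)

section \<open>The theories \<open>T\<^sub>I\<close>\<close>

definition empty_syms :: "('p, 'u) struc \<Rightarrow> 'p set \<Rightarrow> ('p, 'u) struc" where
  "empty_syms M D = M\<lparr>sint := \<lambda>p. if p \<in> D then {} else sint M p\<rparr>"

lemma sdom_empty_syms [simp]: "sdom (empty_syms M D) = sdom M"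
  by (simp add: empty_syms_def)

lemma sint_empty_syms [simp]: "sint (empty_syms M D) p = (if p \<in> D then {} else sint M p)"
  by (simp add: empty_syms_def)

definition TI_axioms :: "'u itself \<Rightarrow> ('s \<Rightarrow> nat) \<Rightarrow> 's set \<Rightarrow> 's fm set \<Rightarrow> nat \<Rightarrow> 's set \<Rightarrow> 's fm set" where
  "TI_axioms u ar \<Sigma>0 T0 n I =
     {\<psi> \<in> T0. sentence ar (I \<union> {R \<in> \<Sigma>0. ar R \<noteq> n}) \<psi>}
     \<union> {alls [0..<ar l] (Neg (Rel l [0..<ar l])) | l. l \<in> I0 u ar \<Sigma>0 T0 n - I}"

lemma TI_eq_entails_axioms:
  "TI u ar \<Sigma>0 T0 n I =
     {\<phi>. sentence ar (Sigma' u ar \<Sigma>0 T0 n) \<phi> \<and>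
          entails u ar (Sigma' u ar \<Sigma>0 T0 n) (TI_axioms u ar \<Sigma>0 T0 n I) \<phi>}"
  by (simp add: TI_def TI_axioms_def Let_def)

locale TI_model =
  fixes u :: "'u itself" and ar :: "'s \<Rightarrow> nat" and \<Sigma>0 :: "'s set" and T0 :: "'s fm set" and n :: nat
    and N0 :: "('s, 'u) struc"
  assumes N0_struct: "is_struct ar \<Sigma>0 N0"
    and N0_models: "\<And>\<psi>. \<psi> \<in> T0 \<Longrightarrow> models N0 \<psi>"
    and T0_complete: "\<And>\<phi>. sentence ar \<Sigma>0 \<phi> \<Longrightarrow> \<phi> \<in> T0 \<or> Neg \<phi> \<in> T0"
    and n_pos: "n \<ge> 1"
begin

abbreviation "NE \<equiv> I0 u ar \<Sigma>0 T0 n"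
abbreviation "\<Sigma>' \<equiv> Sigma' u ar \<Sigma>0 T0 n"
abbreviation "T I \<equiv> TI u ar \<Sigma>0 T0 n I"
abbreviation "axioms I \<equiv> TI_axioms u ar \<Sigma>0 T0 n I"

abbreviation "model_of I \<equiv> empty_syms N0 (NE - I)"

lemma mem_NE: "p \<in> NE \<longleftrightarrow> p \<in> \<Sigma>0 \<and> ar p = n \<and> nonempty_sym u ar \<Sigma>0 T0 p"
  by (simp add: I0_def)

lemma NE_subset_Sigma': "NE \<subseteq> \<Sigma>'"
  by (auto simp: Sigma'_def)

lemma Sigma'_subset: "\<Sigma>' \<subseteq> \<Sigma>0"
  by (auto simp: Sigma'_def I0_def)

lemma N0_nonempty: "sdom N0 \<noteq> {}"
  using N0_struct by (simp add: is_struct_def)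

lemma T0_if_models_N0:
  assumes "sentence ar \<Sigma>0 \<phi>" and "models N0 \<phi>"
  shows "\<phi> \<in> T0"
proof (rule ccontr)
  assume "\<phi> \<notin> T0"
  then have "models N0 (Neg \<phi>)"
    using T0_complete N0_models assms(1) by blast
  moreover obtain a where "a \<in> sdom N0"
    using N0_nonempty by blast
  ultimately show False
    using assms(2) by (auto simp: models_def)
qed

lemma is_struct_model_of: "is_struct ar \<Sigma>' (model_of I)"
  using N0_struct Sigma'_subset by (auto simp: is_struct_def)

lemma model_of_models_axioms:
  assumes "\<psi> \<in> axioms I"
  shows "models (model_of I) \<psi>"
proof (cases rule: UnE[OF assms[unfolded TI_axioms_def]])
  case 1
  then have "models N0 \<psi>" and "wf_fm ar (I \<union> {R \<in> \<Sigma>0. ar R \<noteq> n}) \<psi>"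
    using N0_models by (auto simp: sentence_def)
  moreover have "models (model_of I) \<psi> \<longleftrightarrow> models N0 \<psi>"
    using calculation(2) by (rule models_cong[rotated 2]) (auto simp: I0_def)
  ultimately show ?thesis
    by simp
next
  case 2
  then show ?thesis
    by (auto simp: models_def sat_alls)
qed

lemma axioms_force_empty:
  assumes "\<forall>\<psi>\<in>axioms I. models M \<psi>" and "sdom M \<noteq> {}"
    and "p \<in> NE - I" and "length xs = ar p" and "set xs \<subseteq> sdom M"
  shows "xs \<notin> sint M p"
proof -
  have "alls [0..<ar p] (Neg (Rel p [0..<ar p])) \<in> axioms I"
    using assms(3) by (auto simp: TI_axioms_def)
  then show ?thesis
    using assms models_no_tuple[OF assms(2)] by blast
qed

lemma erase_syms_in_axioms:
  assumes "I \<subseteq> NE" and "sentence ar \<Sigma>' \<phi>" and "models (model_of I) \<phi>"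
  shows "erase_syms (NE - I) \<phi> \<in> axioms I"
proof -
  let ?L = "I \<union> {R \<in> \<Sigma>0. ar R \<noteq> n}"
  let ?\<phi>' = "erase_syms (NE - I) \<phi>"
  have "wf_fm ar (\<Sigma>' - (NE - I)) ?\<phi>'"
    using assms(2) wf_fm_erase_syms by (auto simp: sentence_def)
  moreover have "\<Sigma>' - (NE - I) \<subseteq> ?L"
    using assms(1) by (auto simp: Sigma'_def I0_def)
  ultimately have sentence_L: "sentence ar ?L ?\<phi>'"
    using wf_fm_mono fv_erase_syms assms(2) by (fastforce simp: sentence_def)
  have "models (model_of I) ?\<phi>'"
    using assms(2,3) by (subst models_erase_syms) (auto simp: sentence_def)
  moreover have "models (model_of I) ?\<phi>' \<longleftrightarrow> models N0 ?\<phi>'"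
    using sentence_L by (intro models_cong[where P = ?L]) (auto simp: sentence_def I0_def)
  ultimately have "models N0 ?\<phi>'"
    by simp
  moreover have "sentence ar \<Sigma>0 ?\<phi>'"
  proof -
    have "?L \<subseteq> \<Sigma>0"
      using assms(1) by (auto simp: I0_def)
    then show ?thesis
      using sentence_L by (metis sentence_def wf_fm_mono)
  qed
  ultimately show ?thesis
    using sentence_L T0_if_models_N0 by (simp add: TI_axioms_def)
qed

theorem TI_eq_Th_model_of:
  assumes "I \<subseteq> NE"
  shows "T I = Th ar \<Sigma>' (model_of I)"
proof (intro equalityI subsetI)
  fix \<phi> assume "\<phi> \<in> T I"
  then show "\<phi> \<in> Th ar \<Sigma>' (model_of I)"
    using is_struct_model_of model_of_models_axioms
    by (auto simp: TI_eq_entails_axioms entails_def Th_def)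
next
  fix \<phi> assume "\<phi> \<in> Th ar \<Sigma>' (model_of I)"
  then have \<phi>: "sentence ar \<Sigma>' \<phi>" "models (model_of I) \<phi>"
    by (auto simp: Th_def)
  have "models M \<phi>" if "is_struct ar \<Sigma>' M" and M: "\<forall>\<psi>\<in>axioms I. models M \<psi>" for M :: "('s, 'u) struc"
  proof -
    have "sdom M \<noteq> {}"
      using that(1) by (simp add: is_struct_def)
    then have "models M (erase_syms (NE - I) \<phi>) \<longleftrightarrow> models M \<phi>"
      using \<phi>(1) axioms_force_empty[OF M] by (intro models_erase_syms) (auto simp: sentence_def)
    then show ?thesis
      using M erase_syms_in_axioms[OF assms \<phi>] by blast
  qed
  then show "\<phi> \<in> T I"
    using \<phi>(1) by (simp add: TI_eq_entails_axioms entails_def)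
qed

lemma model_of_models_exists_tuple:
  assumes "s \<in> NE"
  shows "models (model_of I) (exists_tuple ar s) \<longleftrightarrow> s \<in> I"
proof -
  have "entails u ar \<Sigma>0 T0 (exists_tuple ar s)"
    using assms unfolding mem_NE nonempty_sym_def exists_tuple_def by blast
  then have "models N0 (exists_tuple ar s)"
    using N0_struct N0_models by (simp add: entails_def)
  then show ?thesis
    using assms N0_nonempty by (auto simp: models_exists_tuple)
qed

lemma models_exists_tuple_iff_mem:
  assumes "Th ar \<Sigma>' A = T I" and "I \<subseteq> NE" and "s \<in> NE"
  shows "models A (exists_tuple ar s) \<longleftrightarrow> s \<in> I"
proof -
  have "sentence ar \<Sigma>' (exists_tuple ar s)"
    using assms(3) NE_subset_Sigma' by (auto intro: sentence_exists_tuple)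
  then have "models A (exists_tuple ar s) \<longleftrightarrow> models (model_of I) (exists_tuple ar s)"
    using assms(1) TI_eq_Th_model_of[OF assms(2)] by (auto simp: Th_def)
  then show ?thesis
    using model_of_models_exists_tuple[OF assms(3)] by simp
qed

end

section \<open>Theories of \<open>E\<close>-classes are approximated by \<open>F\<close>\<close>

lemma ClE_E:
  fixes u :: "'u itself"
  assumes "T \<in> ClE u ar \<Sigma> \<T>"
  obtains \<A> :: "('p, 'u) struc set" and M :: "('p option, 'u) struc" and a where
    "\<A> \<noteq> {}" and "\<And>A. A \<in> \<A> \<Longrightarrow> is_struct ar \<Sigma> A \<and> Th ar \<Sigma> A \<in> \<T>"
    and "pairwise (\<lambda>A B. sdom A \<inter> sdom B = {}) \<A>"
    and "Th (arE ar) (SigE \<Sigma>) M = Th (arE ar) (SigE \<Sigma>) (Ecomb \<A>)"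
    and "a \<in> sdom M" and "T = Th ar \<Sigma> (induced M {b \<in> sdom M. [a, b] \<in> sint M None})"
  using assms unfolding ClE_def by blast

lemma ClE_I:
  fixes u :: "'u itself" and M :: "('p option, 'u) struc" and \<A> :: "('p, 'u) struc set"
  assumes "\<A> \<noteq> {}" and "\<And>A. A \<in> \<A> \<Longrightarrow> is_struct ar \<Sigma> A \<and> Th ar \<Sigma> A \<in> \<T>"
    and "pairwise (\<lambda>A B. sdom A \<inter> sdom B = {}) \<A>" and "is_struct (arE ar) (SigE \<Sigma>) M"
    and "Th (arE ar) (SigE \<Sigma>) M = Th (arE ar) (SigE \<Sigma>) (Ecomb \<A>)"
    and "a \<in> sdom M" and "C = {b \<in> sdom M. [a, b] \<in> sint M None}"
  shows "Th ar \<Sigma> (induced M C) \<in> ClE u ar \<Sigma> \<T>"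
  unfolding ClE_def using assms by blast

fun conjs :: "'p fm list \<Rightarrow> 'p fm" where
  "conjs [] = Eq 0 0"
| "conjs (\<phi> # \<phi>s) = Conj \<phi> (conjs \<phi>s)"

lemma sat_conjs [simp]: "sat M v (conjs \<phi>s) \<longleftrightarrow> (\<forall>\<phi>\<in>set \<phi>s. sat M v \<phi>)"
  by (induct \<phi>s) auto

lemma fv_conjs: "fv (conjs \<phi>s) \<subseteq> {0} \<union> \<Union> (fv ` set \<phi>s)"
  by (induct \<phi>s) auto

lemma wf_fm_conjs [simp]: "wf_fm ar \<Sigma> (conjs \<phi>s) \<longleftrightarrow> (\<forall>\<phi>\<in>set \<phi>s. wf_fm ar \<Sigma> \<phi>)"
  by (induct \<phi>s) auto

text \<open>The \<open>E\<close>-class of variable 0 contains an \<open>R\<^sub>s\<close>-tuple (\<open>E\<close> is the symbol \<open>None\<close>).\<close>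
definition class_tuple :: "nat \<Rightarrow> 'p \<Rightarrow> 'p option fm" where
  "class_tuple n s =
     exs [1..<Suc n] (Conj (conjs (map (\<lambda>i. Rel None [0, i]) [1..<Suc n])) (Rel (Some s) [1..<Suc n]))"

lemma sat_class_tuple:
  "sat M v (class_tuple n s) \<longleftrightarrow>
     (\<exists>as. length as = n \<and> set as \<subseteq> sdom M \<and> (\<forall>b\<in>set as. [v 0, b] \<in> sint M None)
        \<and> as \<in> sint M (Some s))"
proof -
  let ?xs = "[1..<Suc n]"
  have "sat M (upds v ?xs as) (Conj (conjs (map (\<lambda>i. Rel None [0, i]) ?xs)) (Rel (Some s) ?xs))
      \<longleftrightarrow> (\<forall>b\<in>set as. [v 0, b] \<in> sint M None) \<and> as \<in> sint M (Some s)"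
    if "length as = n" for as
  proof -
    let ?w = "upds v ?xs as"
    have w: "map ?w ?xs = as" "?w 0 = v 0"
      using that by (simp_all add: map_upds upds_other del: upt_Suc)
    have "(\<forall>\<phi>\<in>set (map (\<lambda>i. Rel None [0, i]) ?xs). sat M ?w \<phi>) \<longleftrightarrow>
        (\<forall>b\<in>set (map ?w ?xs). [?w 0, b] \<in> sint M None)"
      by (simp del: upt_Suc)
    then show ?thesis
      unfolding w sat.simps sat_conjs by simp
  qed
  then show ?thesis
    unfolding class_tuple_def sat_exs by (auto simp del: upt_Suc)
qed

lemma fv_class_tuple: "fv (class_tuple n s) \<subseteq> {0}"
proof -
  have "fv (conjs (map (\<lambda>i. Rel None [0, i]) [1..<Suc n])) \<subseteq> {0} \<union> set [1..<Suc n]"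
  proof -
    have "\<Union> (fv ` set (map (\<lambda>i. Rel None [0, i]) [1..<Suc n])) \<subseteq> {0} \<union> set [1..<Suc n]"
      by (auto simp del: upt_Suc)
    then show ?thesis
      using fv_conjs[of "map (\<lambda>i. Rel None [0, i]) [1..<Suc n]"] by blast
  qed
  then show ?thesis
    unfolding class_tuple_def by (auto simp del: upt_Suc)
qed

lemma wf_fm_class_tuple: "s \<in> \<Sigma> \<Longrightarrow> ar s = n \<Longrightarrow> wf_fm (arE ar) (SigE \<Sigma>) (class_tuple n s)"
  by (simp add: class_tuple_def arE_def SigE_def)

lemma sat_Ecomb_class_tuple:
  assumes "n \<ge> 1" and structs: "\<And>A. A \<in> \<A> \<Longrightarrow> is_struct ar \<Sigma> A"
    and disj: "pairwise (\<lambda>A B. sdom A \<inter> sdom B = {}) \<A>"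
    and A: "A \<in> \<A>" and v0: "v 0 \<in> sdom A" and s: "s \<in> \<Sigma>" "ar s = n"
  shows "sat (Ecomb \<A>) v (class_tuple n s) \<longleftrightarrow> models A (exists_tuple ar s)"
proof -
  have same: "B = A" if "B \<in> \<A>" "x \<in> sdom B" "x \<in> sdom A" for B x
    using disj that A unfolding pairwise_def by blast
  have "sat (Ecomb \<A>) v (class_tuple n s) \<longleftrightarrow>
      (\<exists>as. length as = n \<and> set as \<subseteq> sdom A \<and> as \<in> sint A s)"
  proof
    assume "sat (Ecomb \<A>) v (class_tuple n s)"
    then obtain as B where as: "length as = n" "\<forall>b\<in>set as. [v 0, b] \<in> sint (Ecomb \<A>) None"
      and B: "B \<in> \<A>" "as \<in> sint B s"
      by (auto simp: sat_class_tuple Ecomb_def)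
    have "set as \<subseteq> sdom B"
      using B structs[of B] s by (auto simp: is_struct_def)
    moreover obtain b where "b \<in> set as"
      using as(1) \<open>n \<ge> 1\<close> by (cases as) auto
    moreover obtain A' where "A' \<in> \<A>" "v 0 \<in> sdom A'" "b \<in> sdom A'"
      using as(2) \<open>b \<in> set as\<close> by (auto simp: Ecomb_def)
    ultimately have "B = A"
      using B(1) v0 same by (metis subsetD)
    then show "\<exists>as. length as = n \<and> set as \<subseteq> sdom A \<and> as \<in> sint A s"
      using as(1) B \<open>set as \<subseteq> sdom B\<close> by blast
  next
    assume "\<exists>as. length as = n \<and> set as \<subseteq> sdom A \<and> as \<in> sint A s"
    then show "sat (Ecomb \<A>) v (class_tuple n s)"
      unfolding sat_class_tuple using A v0 by (auto simp: Ecomb_def)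
  qed
  also have "\<dots> \<longleftrightarrow> models A (exists_tuple ar s)"
    using structs[OF A] s by (simp add: models_exists_tuple is_struct_def)
  finally show ?thesis .
qed

lemma sat_class_tuple_induced:
  assumes "C = {b \<in> sdom M. [v 0, b] \<in> sint M None}" and "C \<noteq> {}" and "ar s = n"
  shows "sat M v (class_tuple n s) \<longleftrightarrow> models (induced M C) (exists_tuple ar s)"
  using assms by (auto simp: sat_class_tuple models_exists_tuple induced_def)

definition class_pattern :: "nat \<Rightarrow> 'p set \<Rightarrow> 'p list \<Rightarrow> 'p option fm" where
  "class_pattern n J ss =
     conjs (map (\<lambda>s. if s \<in> J then class_tuple n s else Neg (class_tuple n s)) ss)"

lemma sat_class_pattern:
  "sat M v (class_pattern n J ss) \<longleftrightarrow> (\<forall>s\<in>set ss. sat M v (class_tuple n s) \<longleftrightarrow> s \<in> J)"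
  by (induct ss) (auto simp: class_pattern_def)

lemma sentence_no_class_pattern:
  assumes "set ss \<subseteq> \<Sigma>" and "\<And>s. s \<in> set ss \<Longrightarrow> ar s = n"
  shows "sentence (arE ar) (SigE \<Sigma>) (Neg (Ex 0 (class_pattern n J ss)))"
proof -
  have "fv (class_pattern n J ss) \<subseteq> {0}"
    using fv_conjs[of "map (\<lambda>s. if s \<in> J then class_tuple n s else Neg (class_tuple n s)) ss"]
      fv_class_tuple
    unfolding class_pattern_def by fastforce
  moreover have "wf_fm (arE ar) (SigE \<Sigma>) (class_pattern n J ss)"
    using assms by (auto simp: class_pattern_def intro!: wf_fm_class_tuple)
  ultimately show ?thesis
    by (auto simp: sentence_def)
qed

text \<open>\<open>J\<close> lies in the closure of \<open>F\<close> in the product topology on sets.\<close>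
definition approximates :: "'a set set \<Rightarrow> 'a set \<Rightarrow> bool" where
  "approximates F J \<longleftrightarrow> (\<forall>S. finite S \<longrightarrow> (\<exists>I\<in>F. I \<inter> S = J \<inter> S))"

context TI_model
begin

lemma Ecomb_models_no_class_pattern:
  assumes F_sub: "\<And>I. I \<in> F \<Longrightarrow> I \<subseteq> NE"
    and structs: "\<And>A. A \<in> \<A> \<Longrightarrow> is_struct ar \<Sigma>' A \<and> Th ar \<Sigma>' A \<in> T ` F"
    and disj: "pairwise (\<lambda>A B. sdom A \<inter> sdom B = {}) \<A>"
    and ss: "set ss \<subseteq> NE" and disagree: "\<And>I. I \<in> F \<Longrightarrow> I \<inter> set ss \<noteq> J \<inter> set ss"
  shows "models (Ecomb \<A>) (Neg (Ex 0 (class_pattern n J ss)))"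
  unfolding models_def sat.simps(3)
proof (intro allI impI notI)
  fix v :: "nat \<Rightarrow> _"
  assume "range v \<subseteq> sdom (Ecomb \<A>)" and "sat (Ecomb \<A>) v (Ex 0 (class_pattern n J ss))"
  then obtain x where "x \<in> sdom (Ecomb \<A>)" and pattern: "sat (Ecomb \<A>) (v(0 := x)) (class_pattern n J ss)"
    by auto
  then obtain A where A: "A \<in> \<A>" "x \<in> sdom A"
    by (auto simp: Ecomb_def)
  then obtain I where I: "I \<in> F" "Th ar \<Sigma>' A = T I"
    using structs by blast
  have "s \<in> I \<longleftrightarrow> s \<in> J" if "s \<in> set ss" for s
  proof -
    have "s \<in> \<Sigma>'" "ar s = n"
      using that ss NE_subset_Sigma' by (auto simp: mem_NE)
    then have "sat (Ecomb \<A>) (v(0 := x)) (class_tuple n s) \<longleftrightarrow> models A (exists_tuple ar s)"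
      using n_pos structs disj A by (intro sat_Ecomb_class_tuple) auto
    also have "\<dots> \<longleftrightarrow> s \<in> I"
      using that ss models_exists_tuple_iff_mem[OF I(2) F_sub[OF I(1)]] by blast
    finally show ?thesis
      using pattern that by (auto simp: sat_class_pattern)
  qed
  then show False
    using disagree[OF I(1)] by blast
qed

lemma class_satisfies_class_pattern:
  assumes "J \<subseteq> NE" and "a \<in> sdom M" and C: "C = {b \<in> sdom M. [a, b] \<in> sint M None}"
    and TJ: "T J = Th ar \<Sigma>' (induced M C)" and "set ss \<subseteq> NE"
  shows "sat M (\<lambda>_. a) (class_pattern n J ss)"
proof -
  have "Th ar \<Sigma>' (induced M C) = Th ar \<Sigma>' (model_of J)"
    using TJ TI_eq_Th_model_of[OF assms(1)] by simp
  then have "sdom (induced M C) \<noteq> {}"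
    by (rule Th_eq_imp_nonempty) (simp add: N0_nonempty)
  then have "C \<noteq> {}"
    by (simp add: induced_def)
  have "sat M (\<lambda>_. a) (class_tuple n s) \<longleftrightarrow> s \<in> J" if "s \<in> NE" for s
  proof -
    have "sat M (\<lambda>_. a) (class_tuple n s) \<longleftrightarrow> models (induced M C) (exists_tuple ar s)"
      using C \<open>C \<noteq> {}\<close> that by (intro sat_class_tuple_induced) (auto simp: mem_NE)
    also have "\<dots> \<longleftrightarrow> s \<in> J"
      using models_exists_tuple_iff_mem[OF TJ[symmetric] assms(1) that] .
    finally show ?thesis .
  qed
  then show ?thesis
    using assms(5) by (auto simp: sat_class_pattern)
qed

theorem approximates_if_in_ClE:
  assumes F_sub: "\<And>I. I \<in> F \<Longrightarrow> I \<subseteq> NE" and J_sub: "J \<subseteq> NE"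
    and "T J \<in> ClE u ar \<Sigma>' (T ` F)"
  shows "approximates F J"
  unfolding approximates_def
proof (intro allI impI)
  fix S :: "'s set" assume "finite S"
  then obtain ss where ss: "set ss = S \<inter> NE"
    using finite_list[of "S \<inter> NE"] by blast
  obtain \<A> :: "('s, 'u) struc set" and M :: "('s option, 'u) struc" and a where
    "\<A> \<noteq> {}" and structs: "\<And>A. A \<in> \<A> \<Longrightarrow> is_struct ar \<Sigma>' A \<and> Th ar \<Sigma>' A \<in> T ` F"
    and disj: "pairwise (\<lambda>A B. sdom A \<inter> sdom B = {}) \<A>"
    and same_Th: "Th (arE ar) (SigE \<Sigma>') M = Th (arE ar) (SigE \<Sigma>') (Ecomb \<A>)"
    and a: "a \<in> sdom M" and TJ: "T J = Th ar \<Sigma>' (induced M {b \<in> sdom M. [a, b] \<in> sint M None})"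
    using ClE_E[OF assms(3)] by blast
  let ?\<chi> = "Neg (Ex 0 (class_pattern n J ss))"
  show "\<exists>I\<in>F. I \<inter> S = J \<inter> S"
  proof (rule ccontr)
    assume "\<not> (\<exists>I\<in>F. I \<inter> S = J \<inter> S)"
    moreover have "I \<inter> S = J \<inter> S" if "I \<in> F" "I \<inter> set ss = J \<inter> set ss" for I
    proof -
      have "I \<inter> S = I \<inter> set ss" "J \<inter> S = J \<inter> set ss"
        using F_sub[OF that(1)] J_sub ss by auto
      then show ?thesis
        using that(2) by simp
    qed
    ultimately have disagree: "I \<inter> set ss \<noteq> J \<inter> set ss" if "I \<in> F" for I
      using that by blast
    have "models (Ecomb \<A>) ?\<chi>"
      by (rule Ecomb_models_no_class_pattern[OF F_sub structs disj _ disagree]) (use ss in auto)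
    moreover have "sentence (arE ar) (SigE \<Sigma>') ?\<chi>"
      using ss NE_subset_Sigma' by (intro sentence_no_class_pattern) (auto simp: mem_NE)
    ultimately have "models M ?\<chi>"
      using same_Th by (auto simp: Th_def)
    then have "\<not> sat M (\<lambda>_. a) (Ex 0 (class_pattern n J ss))"
      using a by (auto simp: models_def)
    moreover have "sat M (\<lambda>_. a) (class_pattern n J ss)"
      using J_sub a TJ ss by (intro class_satisfies_class_pattern) auto
    ultimately show False
      using a by (metis fun_upd_triv sat.simps(5))
  qed
qed

end

section \<open>Approximation within a chain\<close>

lemma approximatesD: "approximates F J \<Longrightarrow> finite S \<Longrightarrow> \<exists>I\<in>F. I \<inter> S = J \<inter> S"
  by (simp add: approximates_def)

lemma infinite_if_Union_chain_not_mem: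
  assumes "chain\<^sub>\<subseteq> F" and "\<Union>F \<notin> F" and "\<Union>F \<noteq> {}"
  shows "infinite F"
  using Union_in_chain[of F UNIV] assms by (auto simp: chain_subset_alt_def)

lemma infinite_if_Inter_chain_not_mem:
  assumes "chain\<^sub>\<subseteq> F" and "\<Inter>F \<notin> F" and "F \<noteq> {}"
  shows "infinite F"
  using Inter_in_chain[of F UNIV] assms by (auto simp: chain_subset_alt_def)

lemma Union_lower_part_if_approximates:
  assumes chain: "chain\<^sub>\<subseteq> F" and approx: "approximates F J"
    and y: "y \<notin> J" "\<And>I. I \<in> F \<Longrightarrow> J \<subseteq> I \<Longrightarrow> y \<in> I"
  shows "\<Union>{I \<in> F. \<not> J \<subseteq> I} = J"
proof
  show "\<Union>{I \<in> F. \<not> J \<subseteq> I} \<subseteq> J"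
  proof
    fix w assume "w \<in> \<Union>{I \<in> F. \<not> J \<subseteq> I}"
    then obtain I1 x where I1: "I1 \<in> F" "w \<in> I1" "x \<in> J" "x \<notin> I1"
      by blast
    show "w \<in> J"
    proof (rule ccontr)
      assume "w \<notin> J"
      moreover obtain I where "I \<in> F" "I \<inter> {x, w} = J \<inter> {x, w}"
        using approximatesD[OF approx, of "{x, w}"] by auto
      ultimately have "I \<in> F" "x \<in> I" "w \<notin> I"
        using I1 by blast+
      then show False
        using chain I1 unfolding chain_subset_def by blast
    qed
  qed
  show "J \<subseteq> \<Union>{I \<in> F. \<not> J \<subseteq> I}"
  proof
    fix z assume "z \<in> J"
    moreover obtain I where "I \<in> F" "I \<inter> {z, y} = J \<inter> {z, y}"
      using approximatesD[OF approx, of "{z, y}"] by auto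
    ultimately show "z \<in> \<Union>{I \<in> F. \<not> J \<subseteq> I}"
      using y by blast
  qed
qed

theorem accumulation_point_if_approximates:
  assumes chain: "chain\<^sub>\<subseteq> F" and "infinite F" and "J \<notin> F" and "J \<noteq> {}"
    and approx: "approximates F J"
  shows "\<exists>F'\<subseteq>F. infinite F' \<and> ((J = \<Union>F' \<and> J \<notin> F') \<or> (J = \<Inter>F' \<and> J \<notin> F'))"
  \<comment> \<open>Either the members above \<open>J\<close> miss no point outside \<open>J\<close> (then \<open>J\<close> is their
    intersection), or some point outside \<open>J\<close> lies in all of them (then \<open>J\<close> is the union
    of the members not above it).\<close>
proof (cases "\<exists>y. y \<notin> J \<and> (\<forall>I\<in>F. J \<subseteq> I \<longrightarrow> y \<in> I)")
  case True
  then obtain y where "y \<notin> J" "\<And>I. I \<in> F \<Longrightarrow> J \<subseteq> I \<Longrightarrow> y \<in> I"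
    by blast
  let ?L = "{I \<in> F. \<not> J \<subseteq> I}"
  have "\<Union>?L = J"
    by (rule Union_lower_part_if_approximates) fact+
  moreover have "chain\<^sub>\<subseteq> ?L"
    using chain by (auto simp: chain_subset_def)
  ultimately have "infinite ?L"
    using assms(3,4) by (intro infinite_if_Union_chain_not_mem) auto
  with \<open>\<Union>?L = J\<close> show ?thesis
    using assms(3) by (intro exI[of _ ?L]) auto
next
  case False
  let ?U = "{I \<in> F. J \<subseteq> I}"
  show ?thesis
  proof (cases "?U = {}")
    case True
    with False have "J = UNIV"
      by blast
    moreover have "z \<in> \<Union>F" for z
      using approximatesD[OF approx, of "{z}"] \<open>J = UNIV\<close> by auto
    ultimately have "J = \<Union>F"
      by blast
    then show ?thesis
      using assms(2,3) by blast
  next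
    case nonempty: False
    have "\<Inter>?U = J"
      using False by blast
    moreover have "chain\<^sub>\<subseteq> ?U"
      using chain by (auto simp: chain_subset_def)
    ultimately have "infinite ?U"
      using assms(3) nonempty by (intro infinite_if_Inter_chain_not_mem) auto
    with \<open>\<Inter>?U = J\<close> show ?thesis
      using assms(3) by (intro exI[of _ ?U]) auto
  qed
qed

lemma approximates_by_Union_chain:
  assumes chain: "chain\<^sub>\<subseteq> F" and J: "J = \<Union>F" "J \<noteq> {}"
  shows "\<exists>sel. sel ` J \<subseteq> F \<and> approximates (sel ` J) J"
proof -
  have "\<forall>k\<in>J. \<exists>I. I \<in> F \<and> k \<in> I"
    using J(1) by blast
  obtain sel where sel: "\<forall>k\<in>J. sel k \<in> F \<and> k \<in> sel k"
    using bchoice[OF \<open>\<forall>k\<in>J. \<exists>I. I \<in> F \<and> k \<in> I\<close>] by blast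
  have "\<exists>k\<in>J. sel k \<inter> S = J \<inter> S" if "finite S" for S
  proof (cases "S \<inter> J = {}")
    case True
    obtain k where "k \<in> J"
      using J(2) by blast
    moreover have "sel k \<subseteq> J"
      using sel \<open>k \<in> J\<close> J(1) by blast
    ultimately show ?thesis
      using True by blast
  next
    case False
    have "subset.chain UNIV (sel ` (S \<inter> J))"
      using chain sel unfolding subset.chain_def chain_subset_def by blast
    then have "\<Union>(sel ` (S \<inter> J)) \<in> sel ` (S \<inter> J)"
      using that False by (intro Union_in_chain) auto
    then obtain k where k: "k \<in> S \<inter> J" "\<Union>(sel ` (S \<inter> J)) = sel k"
      by blast
    have "S \<inter> J \<subseteq> sel k"
      using sel unfolding k(2)[symmetric] by blast
    moreover have "sel k \<subseteq> J"
      using sel k(1) J(1) by blast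
    ultimately show ?thesis
      using k(1) by blast
  qed
  then have "approximates (sel ` J) J"
    unfolding approximates_def by (metis image_eqI)
  moreover have "sel ` J \<subseteq> F"
    using sel by blast
  ultimately show ?thesis
    by blast
qed

lemma approximates_by_Inter_chain:
  assumes chain: "chain\<^sub>\<subseteq> F" and J: "J = \<Inter>F" "J \<noteq> UNIV"
  shows "\<exists>sel. sel ` (- J) \<subseteq> F \<and> approximates (sel ` (- J)) J"
proof -
  have "\<forall>k\<in>- J. \<exists>I. I \<in> F \<and> k \<notin> I"
    using J(1) by blast
  obtain sel where sel: "\<forall>k\<in>- J. sel k \<in> F \<and> k \<notin> sel k"
    using bchoice[OF \<open>\<forall>k\<in>- J. \<exists>I. I \<in> F \<and> k \<notin> I\<close>] by blast
  have "\<exists>k\<in>- J. sel k \<inter> S = J \<inter> S" if "finite S" for S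
  proof (cases "S - J = {}")
    case True
    obtain k where "k \<notin> J"
      using J(2) by blast
    moreover have "J \<subseteq> sel k"
      using sel \<open>k \<notin> J\<close> J(1) by blast
    ultimately show ?thesis
      using True by blast
  next
    case False
    have "subset.chain UNIV (sel ` (S - J))"
      using chain sel unfolding subset.chain_def chain_subset_def by blast
    then have "\<Inter>(sel ` (S - J)) \<in> sel ` (S - J)"
      using that False by (intro Inter_in_chain) auto
    then obtain k where k: "k \<in> S - J" "\<Inter>(sel ` (S - J)) = sel k"
      by blast
    have "sel k \<inter> (S - J) = {}"
      using sel unfolding k(2)[symmetric] by blast
    moreover have "J \<subseteq> sel k"
      using sel k(1) J(1) by blast
    ultimately show ?thesis
      using k(1) by blast
  qed
  then have "approximates (sel ` (- J)) J"
    unfolding approximates_def by (metis image_eqI)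
  moreover have "sel ` (- J) \<subseteq> F"
    using sel by blast
  ultimately show ?thesis
    by blast
qed

section \<open>Combinations of copies\<close>

text \<open>All structures live in the one type \<open>'u\<close>, so disjoint copies are made with an injection
  \<open>g\<close> that tags every element with an index \<open>d\<close>.\<close>
definition copy :: "('d \<times> 'u \<Rightarrow> 'u) \<Rightarrow> 'd \<Rightarrow> ('p, 'u) struc \<Rightarrow> ('p, 'u) struc" where
  "copy g d A = \<lparr>sdom = (\<lambda>x. g (d, x)) ` sdom A, sint = (\<lambda>p. map (\<lambda>x. g (d, x)) ` sint A p)\<rparr>"

definition copies :: "('d \<times> 'u \<Rightarrow> 'u) \<Rightarrow> 'd set \<Rightarrow> ('d \<Rightarrow> ('p, 'u) struc) \<Rightarrow> ('p, 'u) struc set" where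
  "copies g D Y = (\<lambda>d. copy g d (Y d)) ` D"

lemma Th_copy:
  assumes "inj g"
  shows "Th ar P (copy g d A) = Th ar P A"
proof (rule Th_iso[symmetric])
  have "inj (\<lambda>x. g (d, x))"
    using assms by (auto simp: inj_def)
  then show "inj_on (\<lambda>x. g (d, x)) (sdom A)"
    and "map (\<lambda>x. g (d, x)) xs \<in> sint (copy g d A) p \<longleftrightarrow> xs \<in> sint A p" for p xs
    by (auto simp: copy_def inj_on_def inj_map_eq_map)
qed (simp add: copy_def)

lemma is_struct_copy: "is_struct ar P A \<Longrightarrow> is_struct ar P (copy g d A)"
  by (fastforce simp: is_struct_def copy_def)

lemma map_inj_Pair_eq:
  assumes "inj g"
  shows "map g ps = map (\<lambda>x. g (d, x)) zs \<longleftrightarrow> (\<forall>r\<in>set ps. fst r = d) \<and> zs = map snd ps"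
proof -
  have "map g ps = map (\<lambda>x. g (d, x)) zs \<longleftrightarrow> ps = map (Pair d) zs"
    using inj_map_eq_map[OF assms, of ps "map (Pair d) zs"] by (simp add: comp_def)
  also have "\<dots> \<longleftrightarrow> (\<forall>r\<in>set ps. fst r = d) \<and> zs = map snd ps"
    by (induct ps arbitrary: zs) (auto simp: Cons_eq_map_conv)
  finally show ?thesis .
qed

lemma sdom_Ecomb_copies: "sdom (Ecomb (copies g D Y)) = (\<Union>d\<in>D. (\<lambda>x. g (d, x)) ` sdom (Y d))"
  by (auto simp: Ecomb_def copies_def copy_def)

lemma sint_Ecomb_copies:
  assumes "inj g"
  shows "map g ps \<in> sint (Ecomb (copies g D Y)) q \<longleftrightarrow>
    (\<exists>d\<in>D. (\<forall>r\<in>set ps. fst r = d) \<and>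
       (case q of None \<Rightarrow> length ps = 2 \<and> set (map snd ps) \<subseteq> sdom (Y d)
                | Some p \<Rightarrow> map snd ps \<in> sint (Y d) p))"
proof (cases q)
  case None
  have dom: "g r \<in> sdom (copy g d (Y d)) \<longleftrightarrow> fst r = d \<and> snd r \<in> sdom (Y d)" for r d
    using assms by (cases r) (auto simp: copy_def inj_eq)
  have "map g ps \<in> sint (Ecomb (copies g D Y)) None \<longleftrightarrow>
      (\<exists>r1 r2. ps = [r1, r2] \<and> (\<exists>d\<in>D. g r1 \<in> sdom (copy g d (Y d)) \<and> g r2 \<in> sdom (copy g d (Y d))))"
    by (auto simp: Ecomb_def copies_def map_eq_Cons_conv)
  also have "\<dots> \<longleftrightarrow> (\<exists>d\<in>D. (\<forall>r\<in>set ps. fst r = d) \<and> length ps = 2 \<and> set (map snd ps) \<subseteq> sdom (Y d))"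
    unfolding dom by (auto simp: numeral_2_eq_2 length_Suc_conv)
  finally show ?thesis
    using None by simp
next
  case (Some p)
  then show ?thesis
    by (auto simp: Ecomb_def copies_def copy_def image_iff map_inj_Pair_eq[OF assms])
qed

lemma is_struct_Ecomb:
  assumes "\<And>A. A \<in> \<A> \<Longrightarrow> is_struct ar \<Sigma> A" and "\<A> \<noteq> {}"
  shows "is_struct (arE ar) (SigE \<Sigma>) (Ecomb \<A>)"
  unfolding is_struct_def
proof (intro conjI ballI)
  show "sdom (Ecomb \<A>) \<noteq> {}"
    using assms by (force simp: Ecomb_def is_struct_def)
  fix q assume "q \<in> SigE \<Sigma>"
  then show "sint (Ecomb \<A>) q \<subseteq> {xs. length xs = arE ar q \<and> set xs \<subseteq> sdom (Ecomb \<A>)}"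
    using assms(1) by (fastforce simp: SigE_def arE_def Ecomb_def is_struct_def)
qed

lemma pairwise_disjoint_copies:
  assumes "inj g"
  shows "pairwise (\<lambda>A B. sdom A \<inter> sdom B = {}) (copies g D Y)"
  using assms by (fastforce simp: pairwise_def copies_def copy_def inj_eq)

lemma models_Ecomb_copies_reindex:
  assumes g: "inj g" and \<sigma>: "bij_betw \<sigma> D1 D2" and U: "\<And>d. sdom (Y d) = U"
    and agree: "\<And>d p. d \<in> D1 \<Longrightarrow> p \<in> P \<Longrightarrow> sint (Y (\<sigma> d)) p = sint (Y d) p"
    and wf: "wf_fm ar' (insert None (Some ` P)) \<phi>"
  shows "models (Ecomb (copies g D2 Y)) \<phi> \<longleftrightarrow> models (Ecomb (copies g D1 Y)) \<phi>"
proof -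
  let ?\<tau> = "map_prod \<sigma> id"
  let ?h = "\<lambda>y. g (?\<tau> (inv g y))"
  have h: "?h (g r) = g (?\<tau> r)" for r
    using g by simp
  have dom: "sdom (Ecomb (copies g D Y)) = g ` (D \<times> U)" for D
    unfolding sdom_Ecomb_copies U by auto
  have inj\<sigma>: "inj_on \<sigma> D1" and img\<sigma>: "\<sigma> ` D1 = D2"
    using \<sigma> by (auto simp: bij_betw_def)
  have \<tau>_img: "?\<tau> ` (D1 \<times> U) = D2 \<times> U"
    using img\<sigma> by (force simp: map_prod_def)
  show ?thesis
  proof (rule models_iso[OF _ _ _ wf])
    have "inj_on (g \<circ> ?\<tau>) (D1 \<times> U)"
      using g inj\<sigma> by (intro comp_inj_on map_prod_inj_on) (auto intro: inj_on_subset)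
    then show "inj_on ?h (sdom (Ecomb (copies g D1 Y)))"
      unfolding dom by (intro inj_on_imageI) (simp add: comp_def h)
    show "?h ` sdom (Ecomb (copies g D1 Y)) = sdom (Ecomb (copies g D2 Y))"
      unfolding dom image_image h by (simp flip: \<tau>_img add: image_image)
    fix q xs assume q: "q \<in> insert None (Some ` P)"
      and "set xs \<subseteq> sdom (Ecomb (copies g D1 Y))"
    then have "xs \<in> map g ` lists (D1 \<times> U)"
      unfolding dom lists_image[symmetric] by (simp add: in_lists_conv_set subset_iff)
    then obtain ps where ps: "set ps \<subseteq> D1 \<times> U" "xs = map g ps"
      by (auto simp: in_lists_conv_set)
    let ?R = "\<lambda>d. case q of None \<Rightarrow> length ps = 2 \<and> set (map snd ps) \<subseteq> sdom (Y d)
                    | Some p \<Rightarrow> map snd ps \<in> sint (Y d) p"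
    have R: "?R (\<sigma> d) \<longleftrightarrow> ?R d" if "d \<in> D1" for d
      using q agree[OF that] by (auto simp: U split: option.split)
    have fst: "(\<forall>r\<in>set ps. \<sigma> (fst r) = \<sigma> d) \<longleftrightarrow> (\<forall>r\<in>set ps. fst r = d)" if "d \<in> D1" for d
    proof -
      have "\<sigma> (fst r) = \<sigma> d \<longleftrightarrow> fst r = d" if "r \<in> set ps" for r
        using that ps(1) \<open>d \<in> D1\<close> by (intro inj_on_eq_iff[OF inj\<sigma>]) auto
      then show ?thesis
        by blast
    qed
    have snd_\<tau>: "map snd (map ?\<tau> ps) = map snd ps"
      by (induct ps) auto
    have "map ?h xs = map g (map ?\<tau> ps)"
      unfolding ps(2) by (simp add: h)
    moreover have "map g (map ?\<tau> ps) \<in> sint (Ecomb (copies g D2 Y)) q \<longleftrightarrow>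
        (\<exists>d\<in>\<sigma> ` D1. (\<forall>r\<in>set ps. \<sigma> (fst r) = d) \<and> ?R d)"
      unfolding sint_Ecomb_copies[OF g] img\<sigma> snd_\<tau> length_map by (simp add: comp_def)
    ultimately have "map ?h xs \<in> sint (Ecomb (copies g D2 Y)) q \<longleftrightarrow>
        (\<exists>d\<in>\<sigma> ` D1. (\<forall>r\<in>set ps. \<sigma> (fst r) = d) \<and> ?R d)"
      by (simp only:)
    also have "\<dots> \<longleftrightarrow> (\<exists>d\<in>D1. (\<forall>r\<in>set ps. fst r = d) \<and> ?R d)"
      using R fst by auto
    also have "\<dots> \<longleftrightarrow> xs \<in> sint (Ecomb (copies g D1 Y)) q"
      unfolding ps(2) sint_Ecomb_copies[OF g] ..
    finally show "map ?h xs \<in> sint (Ecomb (copies g D2 Y)) q \<longleftrightarrow> xs \<in> sint (Ecomb (copies g D1 Y)) q" .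
  qed
qed

lemma E_class_Ecomb_copies:
  assumes g: "inj g" and "d0 \<in> D" and "x0 \<in> sdom (Y d0)"
  shows "{b \<in> sdom (Ecomb (copies g D Y)). [g (d0, x0), b] \<in> sint (Ecomb (copies g D Y)) None}
    = (\<lambda>x. g (d0, x)) ` sdom (Y d0)"
proof -
  have "[g (d0, x0), g r] \<in> sint (Ecomb (copies g D Y)) None \<longleftrightarrow> fst r = d0 \<and> snd r \<in> sdom (Y d0)" for r
    using sint_Ecomb_copies[OF g, of "[(d0, x0), r]"] assms(2,3) by auto
  then show ?thesis
    unfolding sdom_Ecomb_copies using assms(2) by force
qed

text \<open>\<open>Ecomb\<close> unites the interpretations, so a 0-ary symbol true in one copy holds in every
  class; this is what the hypothesis \<open>nullary\<close> is for.\<close>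
lemma Th_induced_E_class_copies:
  assumes g: "inj g" and "d0 \<in> D"
    and nullary: "\<And>d p. d \<in> D \<Longrightarrow> p \<in> P \<Longrightarrow> [] \<in> sint (Y d) p \<Longrightarrow> [] \<in> sint (Y d0) p"
  shows "Th ar P (induced (Ecomb (copies g D Y)) ((\<lambda>x. g (d0, x)) ` sdom (Y d0))) = Th ar P (Y d0)"
proof -
  let ?C = "(\<lambda>x. g (d0, x)) ` sdom (Y d0)"
  have "Th ar P (copy g d0 (Y d0)) = Th ar P (induced (Ecomb (copies g D Y)) ?C)"
  proof (rule Th_iso[of id])
    fix p xs assume p: "p \<in> P" and "set xs \<subseteq> sdom (copy g d0 (Y d0))"
    then have "xs \<in> map g ` lists ({d0} \<times> sdom (Y d0))"
      unfolding lists_image[symmetric] by (auto simp: copy_def in_lists_conv_set)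
    then obtain ps where ps: "set ps \<subseteq> {d0} \<times> sdom (Y d0)" "xs = map g ps"
      by (auto simp: in_lists_conv_set)
    have fst_ps: "\<forall>r\<in>set ps. fst r = d0"
      using ps(1) by auto
    have "map g ps \<in> sint (Ecomb (copies g D Y)) (Some p) \<longleftrightarrow> map snd ps \<in> sint (Y d0) p"
    proof (cases "ps = []")
      case True
      then show ?thesis
        using assms(2) nullary[OF _ p] sint_Ecomb_copies[OF g, of "[]" D Y "Some p"] by auto
    next
      case False
      then obtain r where "r \<in> set ps"
        by (cases ps) auto
      then have "(\<forall>r\<in>set ps. fst r = d) \<longleftrightarrow> d = d0" for d
        using fst_ps by metis
      then show ?thesis
        using assms(2) by (simp add: sint_Ecomb_copies[OF g])
    qed
    moreover have "map g ps \<in> sint (copy g d0 (Y d0)) p \<longleftrightarrow> map snd ps \<in> sint (Y d0) p"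
      using ps(1) by (auto simp: copy_def image_iff map_inj_Pair_eq[OF g])
    ultimately show "map id xs \<in> sint (induced (Ecomb (copies g D Y)) ?C) p \<longleftrightarrow> xs \<in> sint (copy g d0 (Y d0)) p"
      using ps by (auto simp: induced_def)
  qed (auto simp: copy_def induced_def)
  then show ?thesis
    using Th_copy[OF g, of ar P d0 "Y d0"] by simp
qed

lemma bij_betw_shift:
  fixes K :: "'a set" and d0 :: "'a \<times> nat"
  assumes "k \<in> K" and "d0 \<notin> K \<times> {0<..}"
  shows "bij_betw (\<lambda>d. if d = (k, 1) then d0 else if fst d = k then (k, snd d - 1) else d)
      (K \<times> {0<..}) (insert d0 (K \<times> {0<..}))"
  by (rule bij_betw_byWitness[where f' = "\<lambda>d. if d = d0 then (k, 1) else if fst d = k then (k, Suc (snd d)) else d"])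
    (use assms in \<open>auto split: if_splits\<close>)

section \<open>Approximations yield theories of \<open>E\<close>-classes\<close>

context TI_model
begin

definition model_family :: "'s set \<Rightarrow> ('s \<Rightarrow> 's set) \<Rightarrow> 's \<times> nat \<Rightarrow> ('s, 'u) struc" where
  "model_family J sel d = model_of (if snd d = 0 then J else sel (fst d))"

lemma sdom_model_family [simp]: "sdom (model_family J sel d) = sdom N0"
  by (simp add: model_family_def)

lemma nullary_model_of:
  assumes "[] \<in> sint (model_of I) p"
  shows "[] \<in> sint (model_of I') p"
proof (cases "p \<in> NE")
  case True
  then have "[] \<notin> sint N0 p"
    using N0_struct n_pos by (fastforce simp: is_struct_def mem_NE)
  then show ?thesis
    using assms by (simp split: if_splits)
qed (use assms in simp)

lemma Th_Ecomb_model_family_shift: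
  assumes g: "inj g" and approx: "approximates (sel ` K) J"
  shows "Th (arE ar) (SigE \<Sigma>') (Ecomb (copies g (insert (k0, 0) (K \<times> {0<..})) (model_family J sel)))
    = Th (arE ar) (SigE \<Sigma>') (Ecomb (copies g (K \<times> {0<..}) (model_family J sel)))"
proof -
  have "models (Ecomb (copies g (insert (k0, 0) (K \<times> {0<..})) (model_family J sel))) \<phi>
      \<longleftrightarrow> models (Ecomb (copies g (K \<times> {0<..}) (model_family J sel))) \<phi>"
    if "sentence (arE ar) (SigE \<Sigma>') \<phi>" for \<phi>
  proof -
    \<comment> \<open>On the symbols \<open>?P\<close> of \<open>\<phi>\<close>, \<open>T\<^sub>J\<close> agrees with \<open>T\<^bsub>sel k\<^esub>\<close>, and shifting the
      copies \<open>(k, i + 1) \<mapsto> (k, i)\<close> onto \<open>(k0, 0)\<close> absorbs the extra class.\<close>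
    let ?P = "Some -` syms \<phi>"
    have "finite ?P"
      using finite_syms by (intro finite_vimageI) auto
    then obtain k where k: "k \<in> K" "sel k \<inter> ?P = J \<inter> ?P"
      using approximatesD[OF approx] by blast
    have wf: "wf_fm (arE ar) (insert None (Some ` ?P)) \<phi>"
    proof (rule wf_fm_mono)
      show "wf_fm (arE ar) (SigE \<Sigma>' \<inter> syms \<phi>) \<phi>"
        using that wf_fm_Int_syms by (auto simp: sentence_def)
      show "SigE \<Sigma>' \<inter> syms \<phi> \<subseteq> insert None (Some ` ?P)"
        by (auto simp: SigE_def)
    qed
    show ?thesis
    proof (rule models_Ecomb_copies_reindex[OF g bij_betw_shift[OF k(1)] _ _ wf])
      show "(k0, 0::nat) \<notin> K \<times> {0<..}"
        by simp
      show "sdom (model_family J sel d) = sdom N0" for d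
        by simp
      fix d :: "'s \<times> nat" and p assume "d \<in> K \<times> {0<..}" and "p \<in> ?P"
      then show "sint (model_family J sel (if d = (k, 1) then (k0, 0) else if fst d = k then (k, snd d - 1) else d)) p
          = sint (model_family J sel d) p"
        using k(2) by (auto simp: model_family_def)
    qed
  qed
  then show ?thesis
    by (auto simp: Th_def)
qed

theorem in_ClE_if_approximates:
  fixes g :: "('s \<times> nat) \<times> 'u \<Rightarrow> 'u" and sel :: "'s \<Rightarrow> 's set"
  assumes g: "inj g" and F_sub: "\<And>I. I \<in> F \<Longrightarrow> I \<subseteq> NE" and J_sub: "J \<subseteq> NE"
    and "K \<noteq> {}" and sel: "sel ` K \<subseteq> F" and approx: "approximates (sel ` K) J"
  shows "T J \<in> ClE u ar \<Sigma>' (T ` F)"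
proof -
  obtain k0 where "k0 \<in> K"
    using \<open>K \<noteq> {}\<close> by blast
  let ?Y = "model_family J sel" and ?d0 = "(k0, 0)" and ?D1 = "K \<times> {0<..}"
  let ?M = "Ecomb (copies g (insert ?d0 ?D1) ?Y)"
  obtain x0 where x0: "x0 \<in> sdom N0"
    using N0_nonempty by blast
  let ?C = "(\<lambda>x. g (?d0, x)) ` sdom (?Y ?d0)"
  have TJ: "T J = Th ar \<Sigma>' (induced ?M ?C)"
    using TI_eq_Th_model_of[OF J_sub] nullary_model_of g
    by (subst Th_induced_E_class_copies) (auto simp: model_family_def)
  show ?thesis
    unfolding TJ
  proof (rule ClE_I)
    show "copies g ?D1 ?Y \<noteq> {}"
      using \<open>k0 \<in> K\<close> by (auto simp: copies_def)
    show "is_struct ar \<Sigma>' A \<and> Th ar \<Sigma>' A \<in> T ` F" if "A \<in> copies g ?D1 ?Y" for A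
      using that sel F_sub TI_eq_Th_model_of Th_copy[OF g] is_struct_copy is_struct_model_of
      by (fastforce simp: copies_def model_family_def)
    show "is_struct (arE ar) (SigE \<Sigma>') ?M"
      by (intro is_struct_Ecomb) (auto simp: copies_def model_family_def intro!: is_struct_copy is_struct_model_of)
    show "g (?d0, x0) \<in> sdom ?M"
      using x0 by (auto simp: sdom_Ecomb_copies)
    show "?C = {b \<in> sdom ?M. [g (?d0, x0), b] \<in> sint ?M None}"
      using x0 by (subst E_class_Ecomb_copies[OF g]) auto
  qed (fact pairwise_disjoint_copies[OF g] Th_Ecomb_model_family_shift[OF g approx])+
qed

end

lemma approximated_by_index_if_accumulation_point:
  fixes F :: "'a set set"
  assumes chain: "chain\<^sub>\<subseteq> F" and "J \<noteq> {}"
    and "\<exists>F'\<subseteq>F. infinite F' \<and> ((J = \<Union>F' \<and> J \<notin> F') \<or> (J = \<Inter>F' \<and> J \<notin> F'))"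
  shows "\<exists>(K :: 'a set) sel. K \<noteq> {} \<and> sel ` K \<subseteq> F \<and> approximates (sel ` K) J"
proof -
  obtain F' where F': "F' \<subseteq> F" "infinite F'" and J: "J = \<Union>F' \<or> J = \<Inter>F'"
    using assms(3) by blast
  have "chain\<^sub>\<subseteq> F'"
    using chain F'(1) by (auto simp: chain_subset_def)
  show ?thesis
    using J
  proof
    assume "J = \<Union>F'"
    then obtain sel where "sel ` J \<subseteq> F'" "approximates (sel ` J) J"
      using approximates_by_Union_chain[OF \<open>chain\<^sub>\<subseteq> F'\<close>] \<open>J \<noteq> {}\<close> by blast
    then have "J \<noteq> {} \<and> sel ` J \<subseteq> F \<and> approximates (sel ` J) J"
      using \<open>J \<noteq> {}\<close> F'(1) by blast
    then show ?thesis
      by (intro exI)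
  next
    assume "J = \<Inter>F'"
    moreover have "J \<noteq> UNIV"
    proof
      assume "J = UNIV"
      then have "F' \<subseteq> {UNIV}"
        using \<open>J = \<Inter>F'\<close> by blast
      then show False
        using F'(2) finite_subset by blast
    qed
    ultimately obtain sel where "sel ` (- J) \<subseteq> F'" "approximates (sel ` (- J)) J"
      using approximates_by_Inter_chain[OF \<open>chain\<^sub>\<subseteq> F'\<close>] by blast
    then have "- J \<noteq> {} \<and> sel ` (- J) \<subseteq> F \<and> approximates (sel ` (- J)) J"
      using \<open>J \<noteq> UNIV\<close> F'(1) by blast
    then show ?thesis
      by (intro exI)
  qed
qed

lemma ex_inj_tagged_into:
  fixes f :: "'s \<Rightarrow> 'u"
  assumes "inj f" and "infinite (UNIV :: 's set)"
  shows "\<exists>g :: ('s \<times> nat) \<times> 'u \<Rightarrow> 'u. inj g"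
proof -
  have "infinite (range f)"
    using assms finite_imageD by blast
  then have "infinite (UNIV :: 'u set)"
    by (rule infinite_super[OF subset_UNIV])
  then have "\<exists>h. bij_betw h ((UNIV :: 'u set) \<times> (UNIV :: 'u set)) (UNIV :: 'u set)"
    unfolding card_of_ordIso by (rule card_of_Times_same_infinite)
  then obtain h :: "'u \<times> 'u \<Rightarrow> 'u" where h: "inj h"
    by (auto simp: bij_betw_def)
  obtain e :: "nat \<Rightarrow> 'u" where e: "inj e"
    using infinite_countable_subset[OF \<open>infinite (UNIV :: 'u set)\<close>] by blast
  have "inj (\<lambda>((s, i), x). h (h (f s, e i), x))"
    by (intro injI) (clarsimp simp: inj_eq[OF h] inj_eq[OF e] inj_eq[OF assms(1)])
  then show ?thesis
    by blast
qed

theorem corollary4p7: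
  fixes ar :: "'s \<Rightarrow> nat" and \<Sigma>0 :: "'s set" and T0 :: "'s fm set"
    and n :: nat and F :: "'s set set" and J :: "'s set"
  assumes universe_large: "\<exists>f :: 's \<Rightarrow> 'u. inj f"
    and T0_complete: "complete_theory TYPE('u) ar \<Sigma>0 T0"
    and T0_LU: "LU TYPE('u) ar \<Sigma>0 T0"
    and n_pos: "n \<ge> 1"
    and I0_inf: "infinite (I0 TYPE('u) ar \<Sigma>0 T0 n)"
    and F_inf: "infinite F"
    and F_index: "\<forall>I\<in>F. index_set TYPE('u) ar \<Sigma>0 T0 n I"
    and F_chain: "\<forall>I1\<in>F. \<forall>I2\<in>F. I1 \<subseteq> I2 \<or> I2 \<subseteq> I1"
    and F_gaps: "\<forall>I1\<in>F. \<forall>I2\<in>F. I1 \<subset> I2 \<longrightarrow> infinite (I2 - I1)"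
    and J_index: "index_set TYPE('u) ar \<Sigma>0 T0 n J"
    and J_new: "TI TYPE('u) ar \<Sigma>0 T0 n J \<notin> TI TYPE('u) ar \<Sigma>0 T0 n ` F"
  shows "TI TYPE('u) ar \<Sigma>0 T0 n J
           \<in> ClE TYPE('u) ar (Sigma' TYPE('u) ar \<Sigma>0 T0 n) (TI TYPE('u) ar \<Sigma>0 T0 n ` F)
         \<longleftrightarrow> (\<exists>F' \<subseteq> F. infinite F' \<and>
                ((J = \<Union>F' \<and> J \<notin> F') \<or> (J = \<Inter>F' \<and> J \<notin> F')))"
proof -
  obtain N0 :: "('s, 'u) struc" where "is_struct ar \<Sigma>0 N0" "\<forall>\<psi>\<in>T0. models N0 \<psi>"
    using T0_complete by (auto simp: complete_theory_def)
  then interpret TI_model "TYPE('u)" ar \<Sigma>0 T0 n N0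
    using T0_complete n_pos by (unfold_locales) (auto simp: complete_theory_def)
  have F_sub: "\<And>I. I \<in> F \<Longrightarrow> I \<subseteq> NE" and J_sub: "J \<subseteq> NE" and "J \<noteq> {}"
    using F_index J_index by (auto simp: index_set_def)
  have "J \<notin> F" and chain: "chain\<^sub>\<subseteq> F"
    using J_new F_chain by (auto simp: chain_subset_def)
  show ?thesis
  proof
    assume "T J \<in> ClE TYPE('u) ar \<Sigma>' (T ` F)"
    then show "\<exists>F'\<subseteq>F. infinite F' \<and> ((J = \<Union>F' \<and> J \<notin> F') \<or> (J = \<Inter>F' \<and> J \<notin> F'))"
      using chain F_inf \<open>J \<notin> F\<close> \<open>J \<noteq> {}\<close> F_sub J_sub
      by (intro accumulation_point_if_approximates approximates_if_in_ClE)
  next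
    assume "\<exists>F'\<subseteq>F. infinite F' \<and> ((J = \<Union>F' \<and> J \<notin> F') \<or> (J = \<Inter>F' \<and> J \<notin> F'))"
    then obtain K :: "'s set" and sel where K: "K \<noteq> {}" "sel ` K \<subseteq> F" "approximates (sel ` K) J"
      using approximated_by_index_if_accumulation_point[OF chain \<open>J \<noteq> {}\<close>] by blast
    obtain g :: "('s \<times> nat) \<times> 'u \<Rightarrow> 'u" where "inj g"
      using universe_large ex_inj_tagged_into infinite_super[OF subset_UNIV I0_inf] by blast
    then show "T J \<in> ClE TYPE('u) ar \<Sigma>' (T ` F)"
      by (rule in_ClE_if_approximates[OF _ F_sub J_sub K])
  qed
qed

end
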